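(* Let $(\Phi,\{\Gamma_x\}_{x\in D},D)$ be a labeled compact information algebra, let $x\in D$, $\psi\in\Gamma_x$ and $\phi\in\Phi_x$. Then $\psi\ll_x\phi$ if and only if $\psi\le\phi$.
   Context: A labeled information algebra $(\Phi,D)$ consists of a lattice $D$, a set $\Phi$ with a labeling $d:\Phi\to D$, a combination $\otimes:\Phi\times\Phi\to\Phi$ and a marginalization $(\phi,x)\mapsto\phi^{\downarrow x}$ defined for $x\le d(\phi)$, such that: $\otimes$ is associative and commutative; for each $s\in D$ there is $e_s$ with $d(e_s)=s$ and $e_s\otimes\phi=\phi$ whenever $d(\phi)=s$; $d(\phi\otimes\psi)=d(\phi)\vee d(\psi)$; $d(\phi^{\downarrow x})=x$; $(\phi^{\downarrow y})^{\downarrow x}=\phi^{\downarrow x}$ for $x\le y\le d(\phi)$; $(\phi\otimes\psi)^{\downarrow x}=\phi\otimes\psi^{\downarrow x\wedge y}$ when $d(\phi)=x$, $d(\psi)=y$; $e_y^{\downarrow x}=e_x$ for $x\le y$; $\phi\otimes\phi^{\downarrow x}=\phi$ for $x\le d(\phi)$. Let $\Phi_x=\{\phi:d(\phi)=x\}$, order $\psi\le\phi$ iff $\psi\otimes\phi=\phi$, and let $\ll_x$ be the way-below relation of the poset $(\Phi_x,\le)$ ($a\ll_x b$ iff for every directed $X\subseteq\Phi_x$ with $b\le\vee X$ there is $c\in X$ with $a\le c$). A labeled compact information algebra $(\Phi,\{\Gamma_x\}_{x\in D},D)$ is a labeled information algebra with $D$ having a top element $\top$, together with, for each $x\in D$,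 a set $\Gamma_x\subseteq\Phi_x$ closed under combination and containing $e_x$, such that: (convergency) every directed $X\subseteq\Gamma_x$ has a supremum $\vee X$ and $\vee X\in\Phi_x$; (density) $\phi=\vee\{\psi\in\Gamma_x:\psi\ll_x\phi\}$ for all $\phi\in\Phi_x$; (compactness) for every directed $X\subseteq\Gamma_x$ and $\phi\in\Gamma_x$ with $\phi\le\vee X$ there is $\psi\in X$ with $\phi\le\psi$. *)

theory Defs
  imports Main
begin

text \<open>A labeled information algebra (Phi, D): the lattice D is a type 'd, the set Phi is the
  type 'p (all elements), labeling d, combination comb, marginalization marg (only
  constrained for x <= d phi), neutral elements e s.\<close>

definition labeled_info_alg ::
  "('p \<Rightarrow> 'd::lattice) \<Rightarrow> ('p \<Rightarrow> 'p \<Rightarrow> 'p) \<Rightarrow> ('p \<Rightarrow> 'd \<Rightarrow> 'p) \<Rightarrow> ('d \<Rightarrow> 'p) \<Rightarrow> bool" where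
  "labeled_info_alg d comb marg e \<longleftrightarrow>
     (\<forall>a b c. comb (comb a b) c = comb a (comb b c)) \<and>
     (\<forall>a b. comb a b = comb b a) \<and>
     (\<forall>s. d (e s) = s) \<and>
     (\<forall>s \<phi>. d \<phi> = s \<longrightarrow> comb (e s) \<phi> = \<phi>) \<and>
     (\<forall>\<phi> \<psi>. d (comb \<phi> \<psi>) = sup (d \<phi>) (d \<psi>)) \<and>
     (\<forall>\<phi> x. x \<le> d \<phi> \<longrightarrow> d (marg \<phi> x) = x) \<and>
     (\<forall>\<phi> x y. x \<le> y \<and> y \<le> d \<phi> \<longrightarrow> marg (marg \<phi> y) x = marg \<phi> x) \<and>
     (\<forall>\<phi> \<psi> x y. d \<phi> = x \<and> d \<psi> = y \<longrightarrow> marg (comb \<phi> \<psi>) x = comb \<phi> (marg \<psi> (inf x y))) \<and>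
     (\<forall>x y. x \<le> y \<longrightarrow> marg (e y) x = e x) \<and>
     (\<forall>\<phi> x. x \<le> d \<phi> \<longrightarrow> comb \<phi> (marg \<phi> x) = \<phi>)"

definition info_le :: "('p \<Rightarrow> 'p \<Rightarrow> 'p) \<Rightarrow> 'p \<Rightarrow> 'p \<Rightarrow> bool" where
  "info_le comb \<psi> \<phi> \<longleftrightarrow> comb \<psi> \<phi> = \<phi>"

definition Phi_at :: "('p \<Rightarrow> 'd) \<Rightarrow> 'd \<Rightarrow> 'p set" where
  "Phi_at d x = {\<phi>. d \<phi> = x}"

definition info_directed :: "('p \<Rightarrow> 'p \<Rightarrow> 'p) \<Rightarrow> 'p set \<Rightarrow> bool" where
  "info_directed comb X \<longleftrightarrow> X \<noteq> {} \<and>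
     (\<forall>a\<in>X. \<forall>b\<in>X. \<exists>c\<in>X. info_le comb a c \<and> info_le comb b c)"

definition is_sup_at :: "('p \<Rightarrow> 'd) \<Rightarrow> ('p \<Rightarrow> 'p \<Rightarrow> 'p) \<Rightarrow> 'd \<Rightarrow> 'p set \<Rightarrow> 'p \<Rightarrow> bool" where
  "is_sup_at d comb x X s \<longleftrightarrow> s \<in> Phi_at d x \<and> (\<forall>a\<in>X. info_le comb a s) \<and>
     (\<forall>u\<in>Phi_at d x. (\<forall>a\<in>X. info_le comb a u) \<longrightarrow> info_le comb s u)"

definition way_below_at :: "('p \<Rightarrow> 'd) \<Rightarrow> ('p \<Rightarrow> 'p \<Rightarrow> 'p) \<Rightarrow> 'd \<Rightarrow> 'p \<Rightarrow> 'p \<Rightarrow> bool" where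
  "way_below_at d comb x a b \<longleftrightarrow>
     (\<forall>X. X \<subseteq> Phi_at d x \<and> info_directed comb X \<longrightarrow>
        (\<forall>s. is_sup_at d comb x X s \<and> info_le comb b s \<longrightarrow> (\<exists>c\<in>X. info_le comb a c)))"

definition labeled_compact_info_alg ::
  "('p \<Rightarrow> 'd::bounded_lattice_top) \<Rightarrow> ('p \<Rightarrow> 'p \<Rightarrow> 'p) \<Rightarrow> ('p \<Rightarrow> 'd \<Rightarrow> 'p) \<Rightarrow> ('d \<Rightarrow> 'p)
     \<Rightarrow> ('d \<Rightarrow> 'p set) \<Rightarrow> bool" where
  "labeled_compact_info_alg d comb marg e Gamma \<longleftrightarrow>
     labeled_info_alg d comb marg e \<and>
     (\<forall>x. Gamma x \<subseteq> Phi_at d x \<and> e x \<in> Gamma x \<and>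
          (\<forall>a\<in>Gamma x. \<forall>b\<in>Gamma x. comb a b \<in> Gamma x)) \<and>
     (\<forall>x X. X \<subseteq> Gamma x \<and> info_directed comb X \<longrightarrow> (\<exists>s. is_sup_at d comb x X s)) \<and>
     (\<forall>x. \<forall>\<phi>\<in>Phi_at d x. is_sup_at d comb x {\<psi>\<in>Gamma x. way_below_at d comb x \<psi> \<phi>} \<phi>) \<and>
     (\<forall>x X \<phi>. X \<subseteq> Gamma x \<and> info_directed comb X \<and> \<phi> \<in> Gamma x \<longrightarrow>
        (\<forall>s. is_sup_at d comb x X s \<and> info_le comb \<phi> s \<longrightarrow> (\<exists>\<psi>\<in>X. info_le comb \<phi> \<psi>)))"

end

theory Submission
  imports Defs
begin

text \<open>Way-below always implies below (test against the singleton \<open>{\<phi>}\<close>). Conversely, let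
  \<open>\<psi> \<le> \<phi> \<le> \<Squnion>X\<close> with \<open>\<psi>\<close> compact, and let \<open>Y\<close> be the set of compact elements lying below
  some member of \<open>X\<close>. \<open>Y\<close> is directed because \<open>\<Gamma>\<^sub>x\<close> is closed under combination, and by
  density \<open>\<Squnion>Y\<close> dominates every member of \<open>X\<close>, hence \<open>\<Squnion>X\<close>. Compactness of \<open>\<psi>\<close> against
  \<open>Y\<close> then yields a member of \<open>X\<close> above \<open>\<psi>\<close>.\<close>

lemma labeled_info_algD:
  assumes "labeled_info_alg d comb marg e"
  shows "comb (comb a b) c = comb a (comb b c)"
    and "comb a b = comb b a"
    and "d (e s) = s"
    and "comb (e (d \<phi>)) \<phi> = \<phi>"
    and "marg (comb \<phi> \<psi>) (d \<phi>) = comb \<phi> (marg \<psi> (inf (d \<phi>) (d \<psi>)))"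
    and "marg (e s) s = e s"
    and "x \<le> d \<phi> \<Longrightarrow> comb \<phi> (marg \<phi> x) = \<phi>"
  using assms unfolding labeled_info_alg_def
  by (metis order.refl)+

lemma labeled_info_alg_marg_label:
  assumes "labeled_info_alg d comb marg e"
  shows "marg \<phi> (d \<phi>) = \<phi>"
proof -
  note A = labeled_info_algD[OF assms]
  have "marg (comb \<phi> (e (d \<phi>))) (d \<phi>) = comb \<phi> (marg (e (d \<phi>)) (inf (d \<phi>) (d (e (d \<phi>)))))"
    by (rule A(5))
  also have "\<dots> = comb \<phi> (e (d \<phi>))"
    by (simp add: A(3,6))
  finally show ?thesis
    using A(2,4) by metis
qed

lemma labeled_info_alg_comb_idem:
  assumes "labeled_info_alg d comb marg e"
  shows "comb \<phi> \<phi> = \<phi>"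
  using labeled_info_algD(7)[OF assms, of "d \<phi>" \<phi>] labeled_info_alg_marg_label[OF assms] by simp

definition lower_in :: "('p \<Rightarrow> 'p \<Rightarrow> 'p) \<Rightarrow> 'p set \<Rightarrow> 'p set \<Rightarrow> 'p set" where
  "lower_in comb G X = {g \<in> G. \<exists>c\<in>X. info_le comb g c}"

context
  fixes d :: "'p \<Rightarrow> 'd::lattice" and comb marg e
  assumes alg: "labeled_info_alg d comb marg e"
begin

lemma info_le_refl: "info_le comb \<phi> \<phi>"
  unfolding info_le_def using labeled_info_alg_comb_idem[OF alg] .

lemma info_le_trans: "info_le comb a b \<Longrightarrow> info_le comb b c \<Longrightarrow> info_le comb a c"
  unfolding info_le_def by (metis labeled_info_algD(1)[OF alg])

lemma info_le_comb_left: "info_le comb a (comb a b)"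
  unfolding info_le_def by (metis labeled_info_algD(1)[OF alg] labeled_info_alg_comb_idem[OF alg])

lemma info_le_comb_right: "info_le comb b (comb a b)"
  using info_le_comb_left labeled_info_algD(2)[OF alg] by metis

lemma info_le_comb_least: "info_le comb a c \<Longrightarrow> info_le comb b c \<Longrightarrow> info_le comb (comb a b) c"
  unfolding info_le_def by (metis labeled_info_algD(1)[OF alg])

lemma info_le_neutral: "\<phi> \<in> Phi_at d x \<Longrightarrow> info_le comb (e x) \<phi>"
  unfolding info_le_def Phi_at_def using labeled_info_algD(4)[OF alg] by blast

lemma is_sup_at_singleton: "\<phi> \<in> Phi_at d x \<Longrightarrow> is_sup_at d comb x {\<phi>} \<phi>"
  unfolding is_sup_at_def by (simp add: info_le_refl)

lemma info_directed_singleton: "info_directed comb {\<phi>}"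
  unfolding info_directed_def by (simp add: info_le_refl)

lemma way_below_at_imp_info_le:
  assumes "way_below_at d comb x \<psi> \<phi>" and "\<phi> \<in> Phi_at d x"
  shows "info_le comb \<psi> \<phi>"
  using assms is_sup_at_singleton info_directed_singleton info_le_refl
  unfolding way_below_at_def by blast

lemma info_directed_lower_in:
  assumes X: "info_directed comb X" and "X \<subseteq> Phi_at d x"
    and e: "e x \<in> G" and G: "\<And>a b. a \<in> G \<Longrightarrow> b \<in> G \<Longrightarrow> comb a b \<in> G"
  shows "info_directed comb (lower_in comb G X)"
  unfolding info_directed_def
proof
  obtain c where "c \<in> X"
    using X unfolding info_directed_def by blast
  then show "lower_in comb G X \<noteq> {}"
    using assms(2) e info_le_neutral unfolding lower_in_def by blast
next
  show "\<forall>a\<in>lower_in comb G X. \<forall>b\<in>lower_in comb G X. \<exists>c\<in>lower_in comb G X. info_le comb a c \<and> info_le comb b c"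
  proof (intro ballI)
    fix a b
    assume a: "a \<in> lower_in comb G X" and b: "b \<in> lower_in comb G X"
    then obtain c1 c2 where "c1 \<in> X" "info_le comb a c1" "c2 \<in> X" "info_le comb b c2"
      unfolding lower_in_def by blast
    then obtain c where "c \<in> X" "info_le comb a c" "info_le comb b c"
      using X info_le_trans unfolding info_directed_def by meson
    then have "comb a b \<in> lower_in comb G X"
      using a b G info_le_comb_least unfolding lower_in_def by blast
    then show "\<exists>c\<in>lower_in comb G X. info_le comb a c \<and> info_le comb b c"
      using info_le_comb_left info_le_comb_right by blast
  qed
qed

lemma is_sup_at_lower_in_above:
  assumes "X \<subseteq> Phi_at d x" and s: "is_sup_at d comb x X s"
    and t: "is_sup_at d comb x (lower_in comb G X) t"
    and dense: "\<And>\<phi>. \<phi> \<in> Phi_at d x \<Longrightarrow> is_sup_at d comb x {g \<in> G. way_below_at d comb x g \<phi>} \<phi>"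
  shows "info_le comb s t"
proof -
  have tP: "t \<in> Phi_at d x"
    using t unfolding is_sup_at_def by blast
  have "info_le comb c t" if c: "c \<in> X" for c
  proof -
    have cP: "c \<in> Phi_at d x"
      using c assms(1) by blast
    have "{g \<in> G. way_below_at d comb x g c} \<subseteq> lower_in comb G X"
      using c cP way_below_at_imp_info_le unfolding lower_in_def by blast
    then have "\<forall>g\<in>{g \<in> G. way_below_at d comb x g c}. info_le comb g t"
      using t unfolding is_sup_at_def by blast
    then show ?thesis
      using dense[OF cP] tP unfolding is_sup_at_def by blast
  qed
  then show ?thesis
    using s tP unfolding is_sup_at_def by blast
qed

end

lemma labeled_compact_info_algD:
  assumes "labeled_compact_info_alg d comb marg e Gamma"
  shows "labeled_info_alg d comb marg e"
    and "e x \<in> Gamma x"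
    and "a \<in> Gamma x \<Longrightarrow> b \<in> Gamma x \<Longrightarrow> comb a b \<in> Gamma x"
    and "X \<subseteq> Gamma x \<Longrightarrow> info_directed comb X \<Longrightarrow> \<exists>s. is_sup_at d comb x X s"
    and "\<phi> \<in> Phi_at d x \<Longrightarrow> is_sup_at d comb x {\<psi> \<in> Gamma x. way_below_at d comb x \<psi> \<phi>} \<phi>"
    and "X \<subseteq> Gamma x \<Longrightarrow> info_directed comb X \<Longrightarrow> \<phi> \<in> Gamma x \<Longrightarrow> is_sup_at d comb x X s \<Longrightarrow>
      info_le comb \<phi> s \<Longrightarrow> \<exists>\<psi>\<in>X. info_le comb \<phi> \<psi>"
  using assms unfolding labeled_compact_info_alg_def by metis+

lemma way_below_at_if_info_le_compact:
  assumes alg: "labeled_compact_info_alg d comb marg e Gamma"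
    and "\<psi> \<in> Gamma x" and "info_le comb \<psi> \<phi>"
  shows "way_below_at d comb x \<psi> \<phi>"
  unfolding way_below_at_def
proof (intro allI impI, elim conjE)
  note C = labeled_compact_info_algD[OF alg]
  fix X s
  assume XP: "X \<subseteq> Phi_at d x" and Xd: "info_directed comb X"
    and s: "is_sup_at d comb x X s" and "info_le comb \<phi> s"
  let ?Y = "lower_in comb (Gamma x) X"
  have YG: "?Y \<subseteq> Gamma x"
    unfolding lower_in_def by blast
  have Yd: "info_directed comb ?Y"
    using info_directed_lower_in[OF C(1) Xd XP C(2) C(3)] .
  obtain t where t: "is_sup_at d comb x ?Y t"
    using C(4)[OF YG Yd] ..
  have "info_le comb s t"
    using is_sup_at_lower_in_above[OF C(1) XP s t C(5)] .
  then have "info_le comb \<psi> t"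
    using assms(3) \<open>info_le comb \<phi> s\<close> info_le_trans[OF C(1)] by blast
  then obtain g where "g \<in> ?Y" "info_le comb \<psi> g"
    using C(6)[OF YG Yd assms(2) t] by blast
  then show "\<exists>c\<in>X. info_le comb \<psi> c"
    using info_le_trans[OF C(1)] unfolding lower_in_def by blast
qed

theorem lemma4p3:
  fixes d :: "'p \<Rightarrow> 'd::bounded_lattice_top"
    and comb :: "'p \<Rightarrow> 'p \<Rightarrow> 'p" and marg :: "'p \<Rightarrow> 'd \<Rightarrow> 'p"
    and e :: "'d \<Rightarrow> 'p" and Gamma :: "'d \<Rightarrow> 'p set"
  assumes "labeled_compact_info_alg d comb marg e Gamma"
    and "\<psi> \<in> Gamma x" and "\<phi> \<in> Phi_at d x"
  shows "way_below_at d comb x \<psi> \<phi> \<longleftrightarrow> info_le comb \<psi> \<phi>"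
  using way_below_at_imp_info_le[OF labeled_compact_info_algD(1)[OF assms(1)] _ assms(3)]
    way_below_at_if_info_le_compact[OF assms(1,2)]
  by blast

end
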